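(* Let $\mathbb{X},\mathbb{Y}$ be finite-dimensional real Hilbert spaces, $f:\mathbb{X}\to(-\infty,\infty]$ and $g:\mathbb{Y}\to(-\infty,\infty]$ proper, convex and lower semicontinuous, $K:\mathbb{X}\to\mathbb{Y}$ linear, and $h:\mathbb{X}\to\mathbb{R}$ convex, differentiable and locally smooth. Let $(x_n)$, $(\tau_n)$, $(\theta_n)$ be generated by the aEGRPDA algorithm described in the context, and suppose $(x_n)$ is bounded. Then the sequences $(\tau_n)$ and $(\theta_n)$ are bounded below by positive constants.
   Context: $\phi=\frac{1+\sqrt5}{2}$; $K^*$ adjoint of $K$; $\|K\|$ operator norm; $\operatorname{prox}_{\lambda f}(x)=\arg\min_{u}\{f(u)+\frac{1}{2\lambda}\|u-x\|^2\}$. Locally smooth: for every compact $D\subset\mathbb{X}$ there is $L_D>0$ with $\|\nabla h(x)-\nabla h(y)\|\le L_D\|x-y\|$ for all $x,y\in D$. aEGRPDA: choose $x_0\in\mathbb{X}$, $y_0\in\mathbb{Y}$, set $z_0=x_0$; choose $\beta>0$, $\psi\in(1,\phi]$, $\rho=\psi^{-1}+\psi^{-2}$, $\theta_0>0$, $\tau_{\max}>0$, $\tau_0>0$. For $n=1,2,\dots$: $z_n=\frac{\psi-1}{\psi}x_{n-1}+\frac1\psi z_{n-1}$; $x_n=\operatorname{prox}_{\tau_{n-1}f}\big(z_n-\tau_{n-1}K^*y_{n-1}-\tau_{n-1}\nabla h(x_{n-1})\big)$; $\tau_n=\min\left\{\rho\tau_{n-1},\ \frac{\psi\theta_{n-1}}{9(\bar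 L_n^2+\beta\psi\|K\|^2)}\frac{1}{\tau_{n-1}},\ \tau_{\max}\right\}$ where $\bar L_n=\frac{\|\nabla h(x_n)-\nabla h(x_{n-1})\|}{\|x_n-x_{n-1}\|}$ (if $x_n=x_{n-1}$, then $\tau_n=\min\{\rho\tau_{n-1},\tau_{\max}\}$; a zero denominator is read as $+\infty$); $\sigma_n=\beta\tau_n$; $w_n=\operatorname{prox}_{\frac1{\sigma_n}g}\big(\frac{y_{n-1}}{\sigma_n}+Kx_n\big)$; $y_n=y_{n-1}+\sigma_n(Kx_n-w_n)$; $\theta_n=\frac{\psi\tau_n}{\tau_{n-1}}$. *)

theory Defs
  imports "HOL-Analysis.Analysis"
begin

definition proper_fun :: "('a \<Rightarrow> ereal) \<Rightarrow> bool" where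
  "proper_fun f \<longleftrightarrow> (\<forall>x. f x \<noteq> -\<infinity>) \<and> (\<exists>x. f x \<noteq> \<infinity>)"

definition convex_fun :: "('a::real_vector \<Rightarrow> ereal) \<Rightarrow> bool" where
  "convex_fun f \<longleftrightarrow> (\<forall>x y t. 0 < t \<and> t < 1 \<longrightarrow>
      f ((1 - t) *\<^sub>R x + t *\<^sub>R y) \<le> ereal (1 - t) * f x + ereal t * f y)"

definition lsc_fun :: "('a::topological_space \<Rightarrow> ereal) \<Rightarrow> bool" where
  "lsc_fun f \<longleftrightarrow> (\<forall>x c. c < f x \<longrightarrow> (\<forall>\<^sub>F y in at x. c < f y))"

definition is_prox :: "real \<Rightarrow> ('a::real_normed_vector \<Rightarrow> ereal) \<Rightarrow> 'a \<Rightarrow> 'a \<Rightarrow> bool" where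
  "is_prox lam f x u \<longleftrightarrow> (\<forall>v. f u + ereal ((norm (u - x))\<^sup>2 / (2 * lam))
                                  \<le> f v + ereal ((norm (v - x))\<^sup>2 / (2 * lam)))"

definition locally_smooth :: "('a::real_normed_vector \<Rightarrow> 'a) \<Rightarrow> bool" where
  "locally_smooth G \<longleftrightarrow> (\<forall>D. compact D \<longrightarrow>
      (\<exists>L>0. \<forall>x\<in>D. \<forall>y\<in>D. norm (G x - G y) \<le> L * norm (x - y)))"

definition golden_ratio :: real where
  "golden_ratio = (1 + sqrt 5) / 2"

end

theory Submission
  imports Defs
begin

text \<open>The iterates stay in a compact set on which \<open>\<nabla>h\<close> is \<open>L\<close>-Lipschitz, so every
  denominator of the step-size rule is at most \<open>D = 9 (L\<^sup>2 + \<beta> \<psi> \<parallel>K\<parallel>\<^sup>2)\<close>. Since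
  \<open>\<theta>(n) / \<tau>(n) = \<psi> / \<tau>(n - 1)\<close> and all step sizes are at most \<open>M = max \<tau>(0) \<tau>_max\<close>,
  the middle term of the rule is at least \<open>\<psi>\<^sup>2 / (D M)\<close>. Together with \<open>\<rho> \<ge> 1\<close>, which is
  where \<open>\<psi> \<le> \<phi>\<close> enters, this gives \<open>\<tau>(n + 1) \<ge> min \<tau>(n) c\<close> for a fixed \<open>c > 0\<close>, hence
  a positive lower bound \<open>b\<close> for \<open>\<tau>\<close>, and then \<open>\<theta>(n) \<ge> \<psi> b / M\<close>.\<close>

lemma golden_ratio_rho_ge_1:
  fixes psi :: real
  assumes "0 < psi" "psi \<le> golden_ratio"
  shows "1 \<le> 1 / psi + 1 / psi\<^sup>2"
proof -
  have "psi\<^sup>2 \<le> psi + 1"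
  proof (cases "psi \<le> 1/2")
    case True
    then have "psi * psi \<le> psi * 1"
      using assms(1) by (intro mult_left_mono) simp_all
    then show ?thesis
      by (simp add: power2_eq_square)
  next
    case False
    have "psi - 1/2 \<le> sqrt 5 / 2"
      using assms(2) unfolding golden_ratio_def by simp
    then have "(psi - 1/2)\<^sup>2 \<le> (sqrt 5 / 2)\<^sup>2"
      using False by (intro power_mono) simp_all
    then show ?thesis
      by (simp add: power2_eq_square algebra_simps power_divide)
  qed
  then show ?thesis
    using assms(1) by (simp add: field_simps power2_eq_square)
qed

lemma locally_smooth_imp_lipschitz_on_bounded:
  fixes G :: "'a::{real_normed_vector, heine_borel} \<Rightarrow> 'a"
  assumes "locally_smooth G" "bounded S"
  obtains L where "0 < L" "\<And>u v. u \<in> S \<Longrightarrow> v \<in> S \<Longrightarrow> norm (G u - G v) \<le> L * norm (u - v)"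
proof -
  have "compact (closure S)"
    using assms(2) by (simp add: compact_closure)
  with assms(1) obtain L where "0 < L"
    "\<forall>u\<in>closure S. \<forall>v\<in>closure S. norm (G u - G v) \<le> L * norm (u - v)"
    unfolding locally_smooth_def by blast
  then show ?thesis
    using that closure_subset by blast
qed

text \<open>No hypothesis \<open>u \<noteq> v\<close> is needed: for \<open>u = v\<close> the quotient is \<open>0 / 0 = 0\<close>.\<close>

lemma lipschitz_difference_quotient_le:
  assumes "norm (G u - G v) \<le> L * norm (u - v)" "0 \<le> L"
  shows "norm (G u - G v) / norm (u - v) \<le> L"
  using assms by (cases "u = v") (simp_all add: divide_le_eq)

lemma step_size_rule_ge_min:
  fixes G :: "'a::real_normed_vector \<Rightarrow> 'a"
  assumes lipschitz: "norm (G u - G v) \<le> L * norm (u - v)" "0 \<le> L"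
    and "1 \<le> rho" "0 < t" "0 \<le> q" "0 \<le> a"
    and step_rule: "t' = (let Lbar = norm (G u - G v) / norm (u - v);
                       den = 9 * (Lbar\<^sup>2 + a)
                   in if u = v \<or> den = 0 then min (rho * t) tmax
                      else min (min (rho * t) (q / den * (1 / t))) tmax)"
  shows "min (min t (q / (9 * (L\<^sup>2 + a) * t))) tmax \<le> t'"
proof -
  define den where "den = 9 * ((norm (G u - G v) / norm (u - v))\<^sup>2 + a)"
  have "norm (G u - G v) / norm (u - v) \<le> L"
    using lipschitz by (rule lipschitz_difference_quotient_le)
  then have "den \<le> 9 * (L\<^sup>2 + a)"
    unfolding den_def by (simp add: power_mono)
  moreover have "0 \<le> den"
    unfolding den_def using \<open>0 \<le> a\<close> by simp
  ultimately have "den \<noteq> 0 \<Longrightarrow> q / (9 * (L\<^sup>2 + a) * t) \<le> q / den * (1 / t)"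
    using \<open>0 < t\<close> \<open>0 \<le> q\<close> by (simp add: frac_le)
  moreover have "t \<le> rho * t"
    using \<open>1 \<le> rho\<close> \<open>0 < t\<close> by simp
  ultimately show ?thesis
    using step_rule unfolding den_def[symmetric] Let_def by auto
qed

lemma bounded_below_if_min_step:
  fixes t :: "nat \<Rightarrow> real"
  assumes "\<And>n. 0 < t n" "0 < c" "\<And>n. m \<le> n \<Longrightarrow> min (t n) c \<le> t (Suc n)"
  shows "\<exists>b>0. \<forall>n. b \<le> t n"
proof -
  have tail: "min (t m) c \<le> t n" if "m \<le> n" for n
    using that
  proof (induction n rule: dec_induct)
    case (step n)
    then show ?case
      using assms(3)[of n] by linarith
  qed simp
  define b where "b = min c (Min (t ` {..m}))"
  have "0 < b"
    unfolding b_def using assms(1,2) by simp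
  moreover have "b \<le> t n" for n
  proof (cases "n \<le> m")
    case True
    then show ?thesis
      unfolding b_def by (simp add: min.coboundedI2)
  next
    case False
    have "b \<le> min (t m) c"
      unfolding b_def by (simp add: min.coboundedI2)
    with tail[of n] False show ?thesis
      by linarith
  qed
  ultimately show ?thesis
    by blast
qed

locale aegrpda_step_sizes =
  fixes gradh :: "'a::{real_normed_vector, heine_borel} \<Rightarrow> 'a"
    and x :: "nat \<Rightarrow> 'a"
    and tau theta :: "nat \<Rightarrow> real"
    and psi rho tau_max kappa :: real
  assumes smooth: "locally_smooth gradh"
    and x_bounded: "bounded (range x)"
    and psi_pos: "0 < psi"
    and rho_ge_1: "1 \<le> rho"
    and kappa_nonneg: "0 \<le> kappa"
    and tau_max_pos: "0 < tau_max"
    and tau0_pos: "0 < tau 0"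
    and theta0_pos: "0 < theta 0"
    and tau_step: "\<And>n. n \<ge> 1 \<Longrightarrow> tau n =
          (let Lbar = norm (gradh (x n) - gradh (x (n - 1))) / norm (x n - x (n - 1));
               den = 9 * (Lbar\<^sup>2 + kappa)
           in if x n = x (n - 1) \<or> den = 0 then min (rho * tau (n - 1)) tau_max
              else min (min (rho * tau (n - 1)) (psi * theta (n - 1) / den * (1 / tau (n - 1)))) tau_max)"
    and theta_step: "\<And>n. n \<ge> 1 \<Longrightarrow> theta n = psi * tau n / tau (n - 1)"
begin

lemma tau_Suc: "tau (Suc n) =
          (let Lbar = norm (gradh (x (Suc n)) - gradh (x n)) / norm (x (Suc n) - x n);
               den = 9 * (Lbar\<^sup>2 + kappa)
           in if x (Suc n) = x n \<or> den = 0 then min (rho * tau n) tau_max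
              else min (min (rho * tau n) (psi * theta n / den * (1 / tau n))) tau_max)"
  using tau_step[of "Suc n"] unfolding diff_Suc_1 by (simp only: Suc_le_mono le0 simp_thms)

lemma theta_Suc: "theta (Suc n) = psi * tau (Suc n) / tau n"
  using theta_step[of "Suc n"] by simp

lemma tau_Suc_ge_min:
  obtains D where "0 < D"
    "\<And>n. 0 < tau n \<Longrightarrow> 0 \<le> theta n \<Longrightarrow>
       min (min (tau n) (psi * theta n / (D * tau n))) tau_max \<le> tau (Suc n)"
proof -
  obtain L where "0 < L" and L: "\<And>u v. u \<in> range x \<Longrightarrow> v \<in> range x \<Longrightarrow>
      norm (gradh u - gradh v) \<le> L * norm (u - v)"
    using locally_smooth_imp_lipschitz_on_bounded[OF smooth x_bounded] by blast
  show ?thesis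
  proof
    show "0 < 9 * (L\<^sup>2 + kappa)"
      using \<open>0 < L\<close> kappa_nonneg by (simp add: add_pos_nonneg)
    show "min (min (tau n) (psi * theta n / (9 * (L\<^sup>2 + kappa) * tau n))) tau_max \<le> tau (Suc n)"
      if "0 < tau n" "0 \<le> theta n" for n
      using step_size_rule_ge_min[OF L _ rho_ge_1 that(1) _ kappa_nonneg tau_Suc]
        \<open>0 < L\<close> psi_pos that(2) by simp
  qed
qed

lemma tau_theta_pos: "0 < tau n \<and> 0 < theta n"
proof (induction n)
  case 0
  show ?case
    using tau0_pos theta0_pos by simp
next
  case (Suc n)
  obtain D where "0 < D" and D: "min (min (tau n) (psi * theta n / (D * tau n))) tau_max \<le> tau (Suc n)"
    using tau_Suc_ge_min Suc by (metis less_imp_le)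
  have "0 < tau (Suc n)"
    using Suc psi_pos tau_max_pos \<open>0 < D\<close> by (intro less_le_trans[OF _ D]) simp
  then show ?case
    using Suc psi_pos by (simp add: theta_Suc)
qed

lemma tau_le_max: "tau n \<le> max (tau 0) tau_max"
proof (cases n)
  case (Suc m)
  have "tau (Suc m) \<le> tau_max"
    by (simp add: tau_Suc Let_def)
  with Suc show ?thesis
    by simp
qed simp

lemma tau_min_step:
  obtains c where "0 < c" "\<And>n. 1 \<le> n \<Longrightarrow> min (tau n) c \<le> tau (Suc n)"
proof -
  obtain D where "0 < D" and D: "\<And>n. min (min (tau n) (psi * theta n / (D * tau n))) tau_max \<le> tau (Suc n)"
    using tau_Suc_ge_min tau_theta_pos by (metis less_imp_le)
  define M where "M = max (tau 0) tau_max"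
  have "0 < M"
    unfolding M_def using tau0_pos by simp
  have middle: "psi\<^sup>2 / (D * M) \<le> psi * theta (Suc m) / (D * tau (Suc m))" for m
  proof -
    have "psi * theta (Suc m) / (D * tau (Suc m)) = psi\<^sup>2 / (D * tau m)"
      using tau_theta_pos[of m] tau_theta_pos[of "Suc m"] \<open>0 < D\<close>
      by (simp add: theta_Suc field_simps power2_eq_square)
    moreover have "D * tau m \<le> D * M"
      using tau_le_max \<open>0 < D\<close> unfolding M_def by simp
    ultimately show ?thesis
      using tau_theta_pos[of m] \<open>0 < D\<close> by (simp add: frac_le)
  qed
  have step: "min (tau n) (min (psi\<^sup>2 / (D * M)) tau_max) \<le> tau (Suc n)" if "1 \<le> n" for n
  proof -
    obtain m where "n = Suc m"
      using \<open>1 \<le> n\<close> by (cases n) simp_all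
    then show ?thesis
      using D[of n] middle[of m] by (simp add: min_def split: if_splits)
  qed
  have "0 < min (psi\<^sup>2 / (D * M)) tau_max"
    using psi_pos \<open>0 < D\<close> \<open>0 < M\<close> tau_max_pos by simp
  then show ?thesis
    using step by (rule that)
qed

lemma tau_bounded_below: "\<exists>c>0. \<forall>n. c \<le> tau n"
proof (rule tau_min_step)
  fix c
  assume "0 < c" "\<And>n. 1 \<le> n \<Longrightarrow> min (tau n) c \<le> tau (Suc n)"
  then show ?thesis
    using bounded_below_if_min_step tau_theta_pos by blast
qed

lemma theta_bounded_below: "\<exists>c>0. \<forall>n. c \<le> theta n"
proof -
  obtain b where "0 < b" and b: "\<And>n. b \<le> tau n"
    using tau_bounded_below by blast
  define M where "M = max (tau 0) tau_max"
  have "min (theta 0) (psi * b / M) \<le> theta n" for n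
  proof (cases n)
    case (Suc m)
    have "psi * b / M \<le> psi * tau n / tau m"
      using b[of n] tau_le_max[of m] tau_theta_pos[of m] psi_pos \<open>0 < b\<close>
      unfolding M_def by (intro frac_le) simp_all
    then show ?thesis
      using Suc by (simp add: theta_Suc)
  qed simp
  moreover have "0 < min (theta 0) (psi * b / M)"
    unfolding M_def using theta0_pos psi_pos \<open>0 < b\<close> tau0_pos by simp
  ultimately show ?thesis
    by blast
qed

end

theorem proposition5p1:
  fixes f :: "'a::euclidean_space \<Rightarrow> ereal"
    and g :: "'b::euclidean_space \<Rightarrow> ereal"
    and K :: "'a \<Rightarrow> 'b"
    and h :: "'a \<Rightarrow> real"
    and gradh :: "'a \<Rightarrow> 'a"
    and x z :: "nat \<Rightarrow> 'a"
    and y w :: "nat \<Rightarrow> 'b"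
    and tau sigma theta :: "nat \<Rightarrow> real"
    and beta psi rho tau_max :: real
  assumes f: "proper_fun f" "convex_fun f" "lsc_fun f"
    and g: "proper_fun g" "convex_fun g" "lsc_fun g"
    and K: "linear K"
    and h_convex: "convex_on UNIV h"
    and h_grad: "\<And>u. (h has_derivative (\<lambda>v. gradh u \<bullet> v)) (at u)"
    and h_smooth: "locally_smooth gradh"
    and beta: "beta > 0"
    and psi: "1 < psi" "psi \<le> golden_ratio"
    and rho: "rho = 1 / psi + 1 / psi\<^sup>2"
    and theta0: "theta 0 > 0"
    and tau_max: "tau_max > 0"
    and tau0: "tau 0 > 0"
    and z0: "z 0 = x 0"
    and z_step: "\<And>n. n \<ge> 1 \<Longrightarrow> z n = ((psi - 1) / psi) *\<^sub>R x (n - 1) + (1 / psi) *\<^sub>R z (n - 1)"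
    and x_step: "\<And>n. n \<ge> 1 \<Longrightarrow> is_prox (tau (n - 1)) f
                   (z n - tau (n - 1) *\<^sub>R adjoint K (y (n - 1)) - tau (n - 1) *\<^sub>R gradh (x (n - 1))) (x n)"
    and tau_step: "\<And>n. n \<ge> 1 \<Longrightarrow> tau n =
          (let Lbar = norm (gradh (x n) - gradh (x (n - 1))) / norm (x n - x (n - 1));
               den = 9 * (Lbar\<^sup>2 + beta * psi * (onorm K)\<^sup>2)
           in if x n = x (n - 1) \<or> den = 0 then min (rho * tau (n - 1)) tau_max
              else min (min (rho * tau (n - 1)) (psi * theta (n - 1) / den * (1 / tau (n - 1)))) tau_max)"
    and sigma_step: "\<And>n. n \<ge> 1 \<Longrightarrow> sigma n = beta * tau n"
    and w_step: "\<And>n. n \<ge> 1 \<Longrightarrow> is_prox (1 / sigma n) g ((1 / sigma n) *\<^sub>R y (n - 1) + K (x n)) (w n)"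
    and y_step: "\<And>n. n \<ge> 1 \<Longrightarrow> y n = y (n - 1) + sigma n *\<^sub>R (K (x n) - w n)"
    and theta_step: "\<And>n. n \<ge> 1 \<Longrightarrow> theta n = psi * tau n / tau (n - 1)"
    and x_bounded: "bounded (range x)"
  shows "(\<exists>c>0. \<forall>n. c \<le> tau n) \<and> (\<exists>c>0. \<forall>n. c \<le> theta n)"
proof -
  have "1 \<le> rho"
    using golden_ratio_rho_ge_1 psi rho by simp
  moreover have "0 \<le> beta * psi * (onorm K)\<^sup>2"
    using beta psi by simp
  ultimately interpret aegrpda_step_sizes gradh x tau theta psi rho tau_max "beta * psi * (onorm K)\<^sup>2"
    using h_smooth x_bounded psi theta0 tau_max tau0 tau_step theta_step
    by unfold_locales simp_all
  show ?thesis
    using tau_bounded_below theta_bounded_below by blast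
qed

end
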